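(* Consider problem (P) and suppose Assumptions A and B hold. Let $\{x^t\}$ be generated by SCP$_{ls}$ and, for each $t$, let $\lambda^t\in\mathbb R^m_+$ be a Lagrange multiplier of the subproblem at iteration $t$ with $(\tilde L_f,\tilde L_g)=(L_f^t,L_g^t)$. Then $\{\lambda^t\}$ is bounded, and every accumulation point of $\{x^t\}$ is a stationary point of (P).
   Context: Problem (P): $\min_{x\in\mathbb R^n}F(x):=f(x)+P_1(x)-P_2(x)+\delta_{\{g\le 0\}}(x)$, where $f:\mathbb R^n\to\mathbb R$ is continuously differentiable, $P_1,P_2:\mathbb R^n\to\mathbb R$ are convex and continuous, $g=(g_1,\dots,g_m):\mathbb R^n\to\mathbb R^m$ is continuous with $\{x:g(x)\le0\}\neq\emptyset$ (componentwise inequalities), $\delta_C$ the indicator function of $C$. Assumption A: (i) $\nabla f$ is Lipschitz with modulus $L_f$; (ii) each $g_i$ is differentiable with $\nabla g_i$ Lipschitz with modulus $L_{g_i}$; (iii) $F$ is level-bounded. Assumption B (MFCQ): each $g_i$ is continuously differentiable and for every $x$ with $g(x)\le0$ there is $d$ with $\langle\nabla g_i(x),d\rangle<0$ for all $i\in I(x):=\{j:g_j(x)=0\}$. Stationary point: $x$ is a stationary point of (P) if there exists $\lambda\in\mathbb R^m_+$ with $g(x)\le0$, $\lambda_ig_i(x)=0$ for all $i$, and $0\in\nabla f(x)+\partial P_1(x)-\partial P_2(x)+\sum_{i=1}^m\lambda_i\nabla g_i(x)$ (convex subdifferentials). $\bar G(x,y,w)\in\mathbb R^m$ has components $\bar G_i(x,y,w)=g_i(y)+\langle\nabla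 g_i(y),x-y\rangle+\frac{w_i}{2}\|x-y\|^2$. Algorithm SCP$_{ls}$: fix $c>0$, $0<\underline L<\bar L$, $\tau>1$ and $x^0$ with $g(x^0)\le0$. For $t=0,1,2,\dots$: (1) pick any $\xi^t\in\partial P_2(x^t)$; (2) choose $L_f^{t,0}\in[\underline L,\bar L]$, $L_g^{t,0}\in[\underline L,\bar L]^m$ arbitrarily, set $\tilde L_f=L_f^{t,0}$, $\tilde L_g=L_g^{t,0}$; (3) compute $\tilde x$ solving: minimize $\langle\nabla f(x^t)-\xi^t,x-x^t\rangle+\frac{\tilde L_f}{2}\|x-x^t\|^2+P_1(x)$ subject to $\bar G(x,x^t,\tilde L_g)\le0$. If $g(\tilde x)\le0$ and $F(\tilde x)\le F(x^t)-\frac c2\|\tilde x-x^t\|^2$, set $x^{t+1}=\tilde x$, $L_f^t=\tilde L_f$, $L_g^t=\tilde L_g$ and go to iteration $t+1$; otherwise, if $g(\tilde x)\not\le0$ replace $\tilde L_g$ by $\tau\tilde L_g$, while if $g(\tilde x)\le0$ but the decrease inequality fails replace $\tilde L_f$ by $\tau\tilde L_f$, and repeat step (3). A Lagrange multiplier of the subproblem at iteration $t$ with $(L_f^t,L_g^t)$ is a vector $\lambda\in\mathbb R^m_+$ such that $x^{t+1}$ minimizes $x\mapsto\langle\nabla f(x^t)-\xi^t,x-x^t\rangle+\frac{L_f^t}{2}\|x-x^t\|^2+P_1(x)+\langle\lambda,\bar G(x,x^t,L_g^t)\rangle$ and $\lambda_i\bar G_i(x^{t+1},x^t,L_g^t)=0$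 for all $i$ (such multipliers exist under Assumptions A and B). *)

theory Defs
  imports "HOL-Analysis.Analysis"
begin

definition subdiff :: "('a::euclidean_space \<Rightarrow> real) \<Rightarrow> 'a \<Rightarrow> 'a set" where
  "subdiff P x = {v. \<forall>y. P y \<ge> P x + v \<bullet> (y - x)}"

definition feasible :: "(nat \<Rightarrow> 'a \<Rightarrow> real) \<Rightarrow> nat \<Rightarrow> 'a \<Rightarrow> bool" where
  "feasible g m x = (\<forall>i<m. g i x \<le> 0)"

definition Gbar :: "(nat \<Rightarrow> 'a::euclidean_space \<Rightarrow> real) \<Rightarrow> (nat \<Rightarrow> 'a \<Rightarrow> 'a) \<Rightarrow> nat
    \<Rightarrow> 'a \<Rightarrow> 'a \<Rightarrow> (nat \<Rightarrow> real) \<Rightarrow> real" where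
  "Gbar g gradg i x y w = g i y + gradg i y \<bullet> (x - y) + w i / 2 * (norm (x - y))\<^sup>2"

definition subobj :: "('a::euclidean_space \<Rightarrow> 'a) \<Rightarrow> ('a \<Rightarrow> real) \<Rightarrow> 'a \<Rightarrow> 'a \<Rightarrow> real \<Rightarrow> 'a \<Rightarrow> real" where
  "subobj gradf P1 y xi Lf x = (gradf y - xi) \<bullet> (x - y) + Lf / 2 * (norm (x - y))\<^sup>2 + P1 x"

definition solves_sub :: "('a::euclidean_space \<Rightarrow> 'a) \<Rightarrow> ('a \<Rightarrow> real) \<Rightarrow> (nat \<Rightarrow> 'a \<Rightarrow> real)
    \<Rightarrow> (nat \<Rightarrow> 'a \<Rightarrow> 'a) \<Rightarrow> nat \<Rightarrow> 'a \<Rightarrow> 'a \<Rightarrow> real \<Rightarrow> (nat \<Rightarrow> real) \<Rightarrow> 'a \<Rightarrow> bool" where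
  "solves_sub gradf P1 g gradg m y xi Lf Lg z =
     ((\<forall>i<m. Gbar g gradg i z y Lg \<le> 0) \<and>
      (\<forall>x. (\<forall>i<m. Gbar g gradg i x y Lg \<le> 0) \<longrightarrow>
            subobj gradf P1 y xi Lf z \<le> subobj gradf P1 y xi Lf x))"

text \<open>One outer iteration of SCP_ls (including the full line search):
  from iterate y with subgradient xi, the algorithm produces the next iterate ynext with
  accepted parameters (Lf, Lg).\<close>
definition scp_ls_step ::
  "('a::euclidean_space \<Rightarrow> real) \<Rightarrow> ('a \<Rightarrow> 'a) \<Rightarrow> ('a \<Rightarrow> real) \<Rightarrow> ('a \<Rightarrow> real)
   \<Rightarrow> (nat \<Rightarrow> 'a \<Rightarrow> real) \<Rightarrow> (nat \<Rightarrow> 'a \<Rightarrow> 'a) \<Rightarrow> nat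
   \<Rightarrow> real \<Rightarrow> real \<Rightarrow> real \<Rightarrow> real
   \<Rightarrow> 'a \<Rightarrow> 'a \<Rightarrow> real \<Rightarrow> (nat \<Rightarrow> real) \<Rightarrow> 'a \<Rightarrow> bool" where
  "scp_ls_step f gradf P1 P2 g gradg m c Llo Lhi \<tau> y xi Lf Lg ynext =
   (let F = (\<lambda>x. f x + P1 x - P2 x);
        accept = (\<lambda>z. feasible g m z \<and> F z \<le> F y - c / 2 * (norm (z - y))\<^sup>2)
    in \<exists>(K::nat) (Lft::nat \<Rightarrow> real) (Lgt::nat \<Rightarrow> nat \<Rightarrow> real) (z::nat \<Rightarrow> 'a).
      Llo \<le> Lft 0 \<and> Lft 0 \<le> Lhi \<and> (\<forall>i<m. Llo \<le> Lgt 0 i \<and> Lgt 0 i \<le> Lhi) \<and>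
      (\<forall>j\<le>K. solves_sub gradf P1 g gradg m y xi (Lft j) (Lgt j) (z j)) \<and>
      (\<forall>j<K. \<not> accept (z j) \<and>
          (if \<not> feasible g m (z j)
           then Lgt (Suc j) = (\<lambda>i. \<tau> * Lgt j i) \<and> Lft (Suc j) = Lft j
           else Lft (Suc j) = \<tau> * Lft j \<and> Lgt (Suc j) = Lgt j)) \<and>
      accept (z K) \<and> ynext = z K \<and> Lf = Lft K \<and> Lg = Lgt K)"

definition sub_multiplier ::
  "('a::euclidean_space \<Rightarrow> 'a) \<Rightarrow> ('a \<Rightarrow> real) \<Rightarrow> (nat \<Rightarrow> 'a \<Rightarrow> real) \<Rightarrow> (nat \<Rightarrow> 'a \<Rightarrow> 'a) \<Rightarrow> nat
   \<Rightarrow> 'a \<Rightarrow> 'a \<Rightarrow> real \<Rightarrow> (nat \<Rightarrow> real) \<Rightarrow> 'a \<Rightarrow> (nat \<Rightarrow> real) \<Rightarrow> bool" where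
  "sub_multiplier gradf P1 g gradg m y xi Lf Lg z lam =
     ((\<forall>i<m. lam i \<ge> 0) \<and>
      (\<forall>x. subobj gradf P1 y xi Lf z + (\<Sum>i<m. lam i * Gbar g gradg i z y Lg)
           \<le> subobj gradf P1 y xi Lf x + (\<Sum>i<m. lam i * Gbar g gradg i x y Lg)) \<and>
      (\<forall>i<m. lam i * Gbar g gradg i z y Lg = 0))"

definition stationary ::
  "('a::euclidean_space \<Rightarrow> 'a) \<Rightarrow> ('a \<Rightarrow> real) \<Rightarrow> ('a \<Rightarrow> real)
   \<Rightarrow> (nat \<Rightarrow> 'a \<Rightarrow> real) \<Rightarrow> (nat \<Rightarrow> 'a \<Rightarrow> 'a) \<Rightarrow> nat \<Rightarrow> 'a \<Rightarrow> bool" where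
  "stationary gradf P1 P2 g gradg m x =
     (feasible g m x \<and>
      (\<exists>lam::nat \<Rightarrow> real. (\<forall>i<m. lam i \<ge> 0 \<and> lam i * g i x = 0) \<and>
         (\<exists>u\<in>subdiff P1 x. \<exists>v\<in>subdiff P2 x.
            gradf x + u - v + (\<Sum>i<m. lam i *\<^sub>R gradg i x) = 0)))"

end

theory Submission
  imports Defs
begin

text \<open>
  Every accepted iterate is feasible and lowers F = f + P1 - P2 by (c/2) |x(t+1) - x(t)|^2, so the
  iterates stay in a bounded level set and the steps tend to zero. The line search only enlarges
  a trial parameter while it is below the Lipschitz constant of grad f (plus c) or of some grad g_i,
  so the accepted parameters are bounded as well. Passing to the limit, along a subsequence, in the
  Lagrangian inequality of the subproblems with multipliers scaled by rho gives at an accumulation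
  point y nonnegative weights w complementary to g(y) such that for all z
    rho0 P1(y) <= rho0 (<grad f(y) - v, z - y> + lf/2 |z - y|^2 + P1(z))
                  + sum_i w_i (<grad g_i(y), z - y> + lg_i/2 |z - y|^2).
  If the multipliers were unbounded, scaling by the reciprocal of their sum (rho0 = 0) would give
  weights summing to one for which the right-hand side is nonnegative, contradicting MFCQ.
  With bounded multipliers (rho = 1) the inequality is a quadratic minorant of the convex function
  P1 at y, which yields the subgradient required for stationarity.
\<close>

lemma lipschitz_gradient_quadratic_upper_bound:
  fixes h :: "'a::euclidean_space \<Rightarrow> real" and gradh :: "'a \<Rightarrow> 'a"
  assumes deriv: "\<And>y. (h has_derivative (\<lambda>v. gradh y \<bullet> v)) (at y)"
    and lip: "\<And>y z. norm (gradh y - gradh z) \<le> L * norm (y - z)"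
  shows "h z \<le> h y + gradh y \<bullet> (z - y) + L / 2 * (norm (z - y))\<^sup>2"
proof -
  define d where "d = z - y"
  define \<psi> where "\<psi> s = h (y + s *\<^sub>R d) - s * (gradh y \<bullet> d) - L / 2 * s\<^sup>2 * (norm d)\<^sup>2" for s
  have \<psi>_deriv: "(\<psi> has_real_derivative (gradh (y + s *\<^sub>R d) - gradh y) \<bullet> d - L * s * (norm d)\<^sup>2) (at s)"
    for s
  proof -
    have "((\<lambda>s. y + s *\<^sub>R d) has_derivative (\<lambda>u. u *\<^sub>R d)) (at s)"
      by (auto intro!: derivative_eq_intros)
    then have "((\<lambda>s. h (y + s *\<^sub>R d)) has_derivative (\<lambda>u. gradh (y + s *\<^sub>R d) \<bullet> (u *\<^sub>R d))) (at s)"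
      using has_derivative_compose[OF _ deriv] by blast
    then have "((\<lambda>s. h (y + s *\<^sub>R d)) has_real_derivative gradh (y + s *\<^sub>R d) \<bullet> d) (at s)"
      by (simp add: has_field_derivative_def mult.commute[of _ "gradh _ \<bullet> d"])
    then show ?thesis
      unfolding \<psi>_def
      by (auto intro!: derivative_eq_intros simp: algebra_simps power2_eq_square)
  qed
  have "\<psi> 1 \<le> \<psi> 0"
  proof (rule DERIV_nonpos_imp_nonincreasing[of 0 1 \<psi>])
    fix s :: real
    assume s: "0 \<le> s" "s \<le> 1"
    have "(gradh (y + s *\<^sub>R d) - gradh y) \<bullet> d \<le> norm (gradh (y + s *\<^sub>R d) - gradh y) * norm d"
      by (rule norm_cauchy_schwarz)
    also have "\<dots> \<le> L * norm (s *\<^sub>R d) * norm d"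
      using lip[of "y + s *\<^sub>R d" y] by (simp add: mult_right_mono)
    also have "\<dots> = L * s * (norm d)\<^sup>2"
      using s by (simp add: power2_eq_square)
    finally show "\<exists>D. DERIV \<psi> s :> D \<and> D \<le> 0"
      using \<psi>_deriv[of s] by (intro exI[of _ "(gradh (y + s *\<^sub>R d) - gradh y) \<bullet> d - L * s * (norm d)\<^sup>2"]) simp
  qed simp
  then show ?thesis
    by (simp add: \<psi>_def d_def)
qed

lemma le_of_forall_pos_le_add_mult:
  fixes A B K :: real
  assumes "\<And>s. 0 < s \<Longrightarrow> s \<le> 1 \<Longrightarrow> A \<le> B + s * K"
  shows "A \<le> B"
proof (rule tendsto_lowerbound)
  show "((\<lambda>s. B + s * K) \<longlongrightarrow> B) (at_right 0)"
    by (auto intro!: tendsto_eq_intros)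
  show "\<forall>\<^sub>F s in at_right 0. A \<le> B + s * K"
    by (rule eventually_mono[OF eventually_at_right_real[OF zero_less_one]]) (use assms in auto)
qed simp

lemma subdiff_of_quadratic_minorant:
  fixes P :: "'a::euclidean_space \<Rightarrow> real"
  assumes convex: "convex_on UNIV P"
    and minorant: "\<And>z. P y \<le> a \<bullet> (z - y) + C * (norm (z - y))\<^sup>2 + P z"
  shows "- a \<in> subdiff P y"
  unfolding subdiff_def
proof safe
  fix z
  define N where "N = (norm (z - y))\<^sup>2"
  have "P y \<le> P z + a \<bullet> (z - y) + s * (C * N)" if s: "0 < s" "s \<le> 1" for s
  proof -
    have "P (y + s *\<^sub>R (z - y)) \<le> (1 - s) * P y + s * P z"
      using convex_onD[OF convex, of s y z] s by (simp add: algebra_simps)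
    moreover have "norm (y + s *\<^sub>R (z - y) - y) = s * norm (z - y)"
      using s by simp
    then have "P y \<le> s * (a \<bullet> (z - y)) + s * (s * (C * N)) + P (y + s *\<^sub>R (z - y))"
      using minorant[of "y + s *\<^sub>R (z - y)"]
      by (simp add: N_def power2_eq_square algebra_simps)
    ultimately have "s * P y \<le> s * (P z + a \<bullet> (z - y) + s * (C * N))"
      by (simp add: algebra_simps)
    then show ?thesis
      using s by simp
  qed
  then have "P y \<le> P z + a \<bullet> (z - y)"
    by (rule le_of_forall_pos_le_add_mult)
  then show "P y + - a \<bullet> (z - y) \<le> P z"
    by simp
qed

lemma subdiff_limit:
  assumes P: "continuous_on UNIV P"
    and sub: "\<And>k. u k \<in> subdiff P (y k)" and y: "y \<longlonglongrightarrow> y0" and u: "u \<longlonglongrightarrow> u0"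
  shows "u0 \<in> subdiff P y0"
  unfolding subdiff_def
proof safe
  fix z
  have "(\<lambda>k. P (y k) + u k \<bullet> (z - y k)) \<longlonglongrightarrow> P y0 + u0 \<bullet> (z - y0)"
    by (intro tendsto_intros continuous_on_tendsto_compose[OF P y] u y) auto
  then show "P y0 + u0 \<bullet> (z - y0) \<le> P z"
    by (rule LIMSEQ_le_const2) (use sub in \<open>auto simp: subdiff_def\<close>)
qed

lemma subdiff_norm_le:
  fixes P :: "'a::euclidean_space \<Rightarrow> real"
  assumes sub: "u \<in> subdiff P y" and y: "norm y \<le> R"
    and bound: "\<And>z. norm z \<le> R + 1 \<Longrightarrow> \<bar>P z\<bar> \<le> B"
  shows "norm u \<le> 2 * B"
proof (cases "u = 0")
  case True
  then show ?thesis
    using bound[of y] y by simp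
next
  case False
  define e where "e = u /\<^sub>R norm u"
  have "P y + u \<bullet> (y + e - y) \<le> P (y + e)"
    using sub unfolding subdiff_def by blast
  moreover have "u \<bullet> e = norm u"
    using False by (simp add: e_def dot_square_norm power2_eq_square)
  moreover have "\<bar>P (y + e)\<bar> \<le> B" "\<bar>P y\<bar> \<le> B"
    using bound y norm_triangle_ineq[of y e] False by (auto simp: e_def)
  ultimately show ?thesis
    by simp
qed

lemma continuous_on_bounded_cball:
  fixes h :: "'a::euclidean_space \<Rightarrow> real"
  assumes "continuous_on UNIV h"
  obtains B where "\<And>y. norm y \<le> R \<Longrightarrow> \<bar>h y\<bar> \<le> B"
proof -
  have "bounded (h ` cball 0 R)"
    by (intro compact_imp_bounded compact_continuous_image continuous_on_subset[OF assms])
      auto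
  then obtain B where B: "\<forall>z\<in>cball 0 R. \<bar>h z\<bar> \<le> B"
    by (auto simp: bounded_iff)
  show ?thesis
    by (rule that[of B]) (use B in simp)
qed

lemma sufficient_decrease_imp_steps_tendsto_zero:
  fixes a :: "nat \<Rightarrow> real" and u :: "nat \<Rightarrow> 'b::real_normed_vector"
  assumes c: "c > 0"
    and decrease: "\<And>t. a (Suc t) \<le> a t - c / 2 * (norm (u (Suc t) - u t))\<^sup>2"
    and lower: "\<And>t. B \<le> a t"
  shows "(\<lambda>t. u (Suc t) - u t) \<longlonglongrightarrow> 0"
proof -
  let ?d = "\<lambda>t. c / 2 * (norm (u (Suc t) - u t))\<^sup>2"
  have telescope: "(\<Sum>t<n. ?d t) \<le> a 0 - a n" for n
  proof (induction n)
    case (Suc n)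
    then show ?case
      using decrease[of n] by simp
  qed simp
  have "summable ?d"
  proof (rule summableI_nonneg_bounded)
    show "(\<Sum>t<n. ?d t) \<le> a 0 - B" for n
      using telescope[of n] lower[of n] by linarith
  qed (use c in simp)
  then have "(\<lambda>t. 2 / c * ?d t) \<longlonglongrightarrow> 2 / c * 0"
    by (intro tendsto_mult_left summable_LIMSEQ_zero)
  then have "(\<lambda>t. (norm (u (Suc t) - u t))\<^sup>2) \<longlonglongrightarrow> 0"
    using c by simp
  then have "(\<lambda>t. sqrt ((norm (u (Suc t) - u t))\<^sup>2)) \<longlonglongrightarrow> sqrt 0"
    by (rule tendsto_real_sqrt)
  then show ?thesis
    by (simp add: tendsto_norm_zero_iff)
qed

lemma bounded_family_convergent_subsequence:
  fixes a :: "nat \<Rightarrow> nat \<Rightarrow> 'b::heine_borel"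
  assumes "\<And>i. i < m \<Longrightarrow> bounded (range (\<lambda>n. a n i))"
  shows "\<exists>r l. strict_mono r \<and> (\<forall>i<m. (\<lambda>k. a (r k) i) \<longlonglongrightarrow> l i)"
  using assms
proof (induction m)
  case 0
  show ?case
    using strict_mono_id by auto
next
  case (Suc m)
  then obtain r l where r: "strict_mono r" "\<forall>i<m. (\<lambda>k. a (r k) i) \<longlonglongrightarrow> l i"
    by auto
  have "bounded (range (\<lambda>k. a (r k) m))"
    using Suc.prems[of m] by (rule bounded_subset) auto
  then obtain l' r' where r': "strict_mono r'" "((\<lambda>k. a (r k) m) \<circ> r') \<longlonglongrightarrow> l'"
    using bounded_imp_convergent_subsequence by blast
  have "(\<lambda>k. a ((r \<circ> r') k) i) \<longlonglongrightarrow> (l(m := l')) i" if "i < Suc m" for i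
  proof (cases "i = m")
    case True
    then show ?thesis
      using r' by (simp add: o_def)
  next
    case False
    then have "i < m"
      using that by simp
    then have "((\<lambda>k. a (r k) i) \<circ> r') \<longlonglongrightarrow> l i"
      using r(2) by (intro LIMSEQ_subseq_LIMSEQ[OF _ r'(1)]) simp
    then show ?thesis
      using False by (simp add: o_def)
  qed
  then show ?case
    using strict_mono_o[OF r(1) r'(1)] by blast
qed

lemma unbounded_above_seqE:
  fixes S :: "nat \<Rightarrow> real"
  assumes "\<not> (\<exists>B. \<forall>t. S t \<le> B)"
  obtains \<sigma> where "filterlim \<sigma> at_top sequentially" "\<And>n. real n < S (\<sigma> n)"
proof -
  have "\<exists>t\<ge>n. real n < S t" for n
  proof (rule ccontr)
    assume "\<not> (\<exists>t\<ge>n. real n < S t)"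
    then have "S t \<le> max (real n) (Max (S ` {..<n}))" for t
      by (cases "t < n") (auto simp: le_max_iff_disj not_less)
    then show False
      using assms by blast
  qed
  then obtain \<sigma> where \<sigma>: "\<And>n. n \<le> \<sigma> n \<and> real n < S (\<sigma> n)"
    by metis
  have "filterlim \<sigma> at_top sequentially"
    by (rule filterlim_at_top_mono[OF filterlim_ident]) (use \<sigma> in auto)
  then show ?thesis
    using that \<sigma> by blast
qed

lemma backtracking_scalar_bound:
  fixes a :: "nat \<Rightarrow> real"
  assumes tau: "\<tau> > 1" and a0: "a 0 \<ge> 0"
    and update: "\<And>j. j < K \<Longrightarrow> a (Suc j) = a j \<or> (a (Suc j) = \<tau> * a j \<and> a j < b)"
  shows "j \<le> K \<Longrightarrow> a 0 \<le> a j \<and> a j \<le> max (a 0) (\<tau> * b)"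
proof (induction j)
  case (Suc j)
  then have "a 0 \<le> a j" "a j \<le> max (a 0) (\<tau> * b)"
    by auto
  moreover have "a j \<le> \<tau> * a j"
    using \<open>a 0 \<le> a j\<close> a0 tau by (simp add: mult_le_cancel_right1)
  moreover have "a j < b \<Longrightarrow> \<tau> * a j \<le> \<tau> * b"
    using tau by simp
  ultimately show ?case
    using update[of j] Suc.prems by auto
qed simp

lemma backtracking_uniform_scaling_factor:
  fixes a :: "nat \<Rightarrow> nat \<Rightarrow> real"
  assumes tau: "\<tau> > 1" and lo: "lo > 0"
    and a0: "\<And>i. i < m \<Longrightarrow> lo \<le> a 0 i"
    and update: "\<And>j. j < K \<Longrightarrow>
       a (Suc j) = a j \<or> (a (Suc j) = (\<lambda>i. \<tau> * a j i) \<and> (\<exists>i<m. a j i < b))"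
  shows "j \<le> K \<Longrightarrow> \<exists>\<rho>. 1 \<le> \<rho> \<and> \<rho> \<le> max 1 (\<tau> * b / lo) \<and> (\<forall>i<m. a j i = \<rho> * a 0 i)"
proof (induction j)
  case 0
  show ?case
    by (intro exI[of _ 1]) simp
next
  case (Suc j)
  then obtain \<rho> where \<rho>: "1 \<le> \<rho>" "\<rho> \<le> max 1 (\<tau> * b / lo)" "\<forall>i<m. a j i = \<rho> * a 0 i"
    by auto
  show ?case
  proof (cases "a (Suc j) = a j")
    case True
    then show ?thesis
      using \<rho> by auto
  next
    case False
    then obtain k where scaled: "a (Suc j) = (\<lambda>i. \<tau> * a j i)" "k < m" "a j k < b"
      using update[of j] Suc.prems by auto
    have "\<rho> * lo \<le> \<rho> * a 0 k"
      using a0[OF \<open>k < m\<close>] \<rho>(1) by simp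
    then have "\<rho> < b / lo"
      using scaled \<rho>(3) lo by (simp add: field_simps)
    then have "\<tau> * \<rho> \<le> \<tau> * (b / lo)"
      using tau by (intro mult_left_mono) auto
    then have "\<tau> * \<rho> \<le> max 1 (\<tau> * b / lo)"
      by (simp add: le_max_iff_disj)
    moreover have "1 \<le> \<tau> * \<rho>"
      using mult_mono[of 1 \<tau> 1 \<rho>] tau \<rho>(1) by simp
    ultimately show ?thesis
      using scaled \<rho>(3) by (intro exI[of _ "\<tau> * \<rho>"]) auto
  qed
qed

lemma backtracking_uniform_scaling_bound:
  fixes a :: "nat \<Rightarrow> nat \<Rightarrow> real"
  assumes tau: "\<tau> > 1" and lo: "lo > 0"
    and a0: "\<And>i. i < m \<Longrightarrow> lo \<le> a 0 i \<and> a 0 i \<le> hi"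
    and update: "\<And>j. j < K \<Longrightarrow>
       a (Suc j) = a j \<or> (a (Suc j) = (\<lambda>i. \<tau> * a j i) \<and> (\<exists>i<m. a j i < b))"
    and i: "i < m"
  shows "lo \<le> a K i \<and> a K i \<le> max 1 (\<tau> * b / lo) * hi"
proof -
  obtain \<rho> where \<rho>: "1 \<le> \<rho>" "\<rho> \<le> max 1 (\<tau> * b / lo)" "a K i = \<rho> * a 0 i"
    using backtracking_uniform_scaling_factor[where a = a and j = K, OF tau lo _ update] a0 i by blast
  have "1 * a 0 i \<le> \<rho> * a 0 i"
    using a0[OF i] \<rho>(1) lo by (intro mult_right_mono) auto
  then have "lo \<le> \<rho> * a 0 i"
    using a0[OF i] by simp
  moreover have "\<rho> * a 0 i \<le> max 1 (\<tau> * b / lo) * hi"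
    using a0[OF i] \<rho> lo by (intro mult_mono) auto
  ultimately show ?thesis
    using \<rho>(3) by simp
qed

lemma mfcq_multipliers_vanish:
  fixes w lg :: "nat \<Rightarrow> real" and y d :: "'a::real_inner"
  assumes w_nonneg: "\<And>i. i < m \<Longrightarrow> 0 \<le> w i"
    and compl: "\<And>i. i < m \<Longrightarrow> w i * g i y = 0"
    and mfcq: "\<And>i. i < m \<Longrightarrow> g i y = 0 \<Longrightarrow> gradg i y \<bullet> d < 0"
    and model: "\<And>z. 0 \<le> (\<Sum>i<m. w i * (gradg i y \<bullet> (z - y) + lg i / 2 * (norm (z - y))\<^sup>2))"
  shows "\<forall>i<m. w i = 0"
proof -
  define a where "a = (\<Sum>i<m. w i * (gradg i y \<bullet> d))"
  define C where "C = (\<Sum>i<m. w i * (lg i / 2)) * (norm d)\<^sup>2"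
  \<comment> \<open>Test the model at z = y + s d and let s tend to 0.\<close>
  have "0 \<le> s * (a + s * C)" if "s > 0" for s
  proof -
    have "(\<Sum>i<m. w i * (gradg i y \<bullet> (s *\<^sub>R d) + lg i / 2 * (norm (s *\<^sub>R d))\<^sup>2))
        = (\<Sum>i<m. s * (w i * (gradg i y \<bullet> d)) + s * (s * (w i * (lg i / 2) * (norm d)\<^sup>2)))"
      by (intro sum.cong) (auto simp: power2_eq_square algebra_simps)
    also have "\<dots> = s * (a + s * C)"
      by (simp add: a_def C_def sum.distrib sum_distrib_left sum_distrib_right algebra_simps)
    finally show ?thesis
      using model[of "y + s *\<^sub>R d"] by simp
  qed
  then have "0 \<le> a + s * C" if "s > 0" for s
    using that by (simp add: zero_le_mult_iff)
  then have "0 \<le> a"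
    by (intro le_of_forall_pos_le_add_mult[of 0 a C]) auto
  moreover have terms_nonpos: "w i * (gradg i y \<bullet> d) \<le> 0" if "i < m" for i
  proof (cases "w i = 0")
    case False
    then have "g i y = 0"
      using compl[OF that] by simp
    then show ?thesis
      using w_nonneg[OF that] mfcq[OF that] by (simp add: mult_nonneg_nonpos)
  qed simp
  ultimately have "(\<Sum>i<m. - (w i * (gradg i y \<bullet> d))) = 0"
    using sum_nonpos[of "{..<m}" "\<lambda>i. w i * (gradg i y \<bullet> d)"]
    by (simp add: a_def sum_negf)
  then have terms_zero: "\<forall>i<m. w i * (gradg i y \<bullet> d) = 0"
    using terms_nonpos by (subst (asm) sum_nonneg_eq_0_iff) auto
  show ?thesis
  proof (intro allI impI)
    fix i
    assume "i < m"
    show "w i = 0"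
    proof (rule ccontr)
      assume "w i \<noteq> 0"
      then have "gradg i y \<bullet> d < 0"
        using compl[OF \<open>i < m\<close>] mfcq[OF \<open>i < m\<close>] by simp
      then show False
        using terms_zero \<open>w i \<noteq> 0\<close> \<open>i < m\<close> by force
    qed
  qed
qed

lemma solves_sub_sufficient_decrease:
  fixes f P1 P2 :: "'a::euclidean_space \<Rightarrow> real"
  assumes f_upper: "f z \<le> f y + gradf y \<bullet> (z - y) + L / 2 * (norm (z - y))\<^sup>2"
    and y: "feasible g m y" and xi: "xi \<in> subdiff P2 y"
    and sol: "solves_sub gradf P1 g gradg m y xi Lfv Lgv z"
    and large: "L + c \<le> Lfv"
  shows "f z + P1 z - P2 z \<le> f y + P1 y - P2 y - c / 2 * (norm (z - y))\<^sup>2"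
proof -
  have "\<forall>i<m. Gbar g gradg i y y Lgv \<le> 0"
    using y by (simp add: Gbar_def feasible_def)
  then have "subobj gradf P1 y xi Lfv z \<le> subobj gradf P1 y xi Lfv y"
    using sol by (simp add: solves_sub_def)
  then have model: "(gradf y - xi) \<bullet> (z - y) + Lfv / 2 * (norm (z - y))\<^sup>2 + P1 z \<le> P1 y"
    by (simp add: subobj_def)
  have "P2 y + xi \<bullet> (z - y) \<le> P2 z"
    using xi by (simp add: subdiff_def)
  moreover have "(L + c) / 2 * (norm (z - y))\<^sup>2 \<le> Lfv / 2 * (norm (z - y))\<^sup>2"
    using large by (intro mult_right_mono) auto
  ultimately show ?thesis
    using model f_upper by (simp add: algebra_simps)
qed

lemma solves_sub_infeasible_imp_small_Lg:
  assumes sol: "solves_sub gradf P1 g gradg m y xi Lfv Lgv z"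
    and infeasible: "\<not> feasible g m z"
    and g_upper: "\<And>i. i < m \<Longrightarrow> g i z \<le> g i y + gradg i y \<bullet> (z - y) + Lg0 / 2 * (norm (z - y))\<^sup>2"
  shows "\<exists>i<m. Lgv i < Lg0"
proof -
  obtain i where i: "i < m" "g i z > 0"
    using infeasible by (auto simp: feasible_def not_le)
  have "Gbar g gradg i z y Lgv \<le> 0"
    using sol i by (simp add: solves_sub_def)
  then have "Lg0 / 2 * (norm (z - y))\<^sup>2 > Lgv i / 2 * (norm (z - y))\<^sup>2"
    using g_upper[OF i(1)] i(2) by (simp add: Gbar_def)
  then have "Lgv i < Lg0"
    by (auto simp: mult_less_cancel_right)
  then show ?thesis
    using i(1) by blast
qed

lemma scp_ls_step_accepted:
  assumes "scp_ls_step f gradf P1 P2 g gradg m c Llo Lhi \<tau> y xi Lf Lg ynext"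
  shows "feasible g m ynext"
    and "f ynext + P1 ynext - P2 ynext \<le> f y + P1 y - P2 y - c / 2 * (norm (ynext - y))\<^sup>2"
  using assms by (auto simp: scp_ls_step_def Let_def)

lemma scp_ls_step_parameter_bounds:
  fixes f P1 P2 :: "'a::euclidean_space \<Rightarrow> real"
  assumes f_upper: "\<And>z. f z \<le> f y + gradf y \<bullet> (z - y) + L / 2 * (norm (z - y))\<^sup>2"
    and g_upper: "\<And>i z. i < m \<Longrightarrow>
       g i z \<le> g i y + gradg i y \<bullet> (z - y) + Lg0 / 2 * (norm (z - y))\<^sup>2"
    and tau: "\<tau> > 1" and Llo: "Llo > 0"
    and y: "feasible g m y" and xi: "xi \<in> subdiff P2 y"
    and step: "scp_ls_step f gradf P1 P2 g gradg m c Llo Lhi \<tau> y xi Lf Lg ynext"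
  shows "Llo \<le> Lf \<and> Lf \<le> max Lhi (\<tau> * (L + c))"
    and "\<And>i. i < m \<Longrightarrow> Llo \<le> Lg i \<and> Lg i \<le> max 1 (\<tau> * Lg0 / Llo) * Lhi"
proof -
  obtain K Lft Lgt z where
    init: "Llo \<le> Lft 0" "Lft 0 \<le> Lhi" "\<And>i. i < m \<Longrightarrow> Llo \<le> Lgt 0 i \<and> Lgt 0 i \<le> Lhi"
    and sol: "\<And>j. j \<le> K \<Longrightarrow> solves_sub gradf P1 g gradg m y xi (Lft j) (Lgt j) (z j)"
    and rejected: "\<And>j. j < K \<Longrightarrow> \<not> (feasible g m (z j) \<and>
        f (z j) + P1 (z j) - P2 (z j) \<le> f y + P1 y - P2 y - c / 2 * (norm (z j - y))\<^sup>2)"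
    and update: "\<And>j. j < K \<Longrightarrow> (if \<not> feasible g m (z j)
        then Lgt (Suc j) = (\<lambda>i. \<tau> * Lgt j i) \<and> Lft (Suc j) = Lft j
        else Lft (Suc j) = \<tau> * Lft j \<and> Lgt (Suc j) = Lgt j)"
    and final: "Lf = Lft K" "Lg = Lgt K"
    using step unfolding scp_ls_step_def Let_def by blast
  have Lf_update: "Lft (Suc j) = Lft j \<or> (Lft (Suc j) = \<tau> * Lft j \<and> Lft j < L + c)"
    if "j < K" for j
  proof (cases "feasible g m (z j)")
    case True
    then have "\<not> L + c \<le> Lft j"
      using rejected[OF that] solves_sub_sufficient_decrease[OF f_upper y xi sol] that by auto
    then show ?thesis
      using update[OF that] True by auto
  qed (use update[OF that] in auto)
  have Lg_update: "Lgt (Suc j) = Lgt j \<or> (Lgt (Suc j) = (\<lambda>i. \<tau> * Lgt j i) \<and> (\<exists>i<m. Lgt j i < Lg0))"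
    if "j < K" for j
  proof (cases "feasible g m (z j)")
    case False
    moreover have "j \<le> K"
      using that by simp
    ultimately have "\<exists>i<m. Lgt j i < Lg0"
      using solves_sub_infeasible_imp_small_Lg[OF sol _ g_upper] by blast
    then show ?thesis
      using update[OF that] False by auto
  qed (use update[OF that] in auto)
  show "Llo \<le> Lf \<and> Lf \<le> max Lhi (\<tau> * (L + c))"
    using backtracking_scalar_bound[where a = Lft and K = K and j = K, OF tau _ Lf_update] init Llo final
    by auto
  show "Llo \<le> Lg i \<and> Lg i \<le> max 1 (\<tau> * Lg0 / Llo) * Lhi" if "i < m" for i
    using backtracking_uniform_scaling_bound[where a = Lgt, OF tau Llo init(3) Lg_update that] final by simp
qed

locale scp_ls_run =
  fixes f P1 P2 :: "'a::euclidean_space \<Rightarrow> real"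
    and gradf :: "'a \<Rightarrow> 'a"
    and g :: "nat \<Rightarrow> 'a \<Rightarrow> real" and gradg :: "nat \<Rightarrow> 'a \<Rightarrow> 'a" and m :: nat
    and c Llo Lhi \<tau> :: real
    and x xi :: "nat \<Rightarrow> 'a" and Lf :: "nat \<Rightarrow> real" and Lg lam :: "nat \<Rightarrow> nat \<Rightarrow> real"
  assumes f_grad: "\<And>y. (f has_derivative (\<lambda>h. gradf y \<bullet> h)) (at y)"
    and P1_convex: "convex_on UNIV P1" and P1_cont: "continuous_on UNIV P1"
    and P2_cont: "continuous_on UNIV P2"
    and A1: "\<exists>L. \<forall>y z. norm (gradf y - gradf z) \<le> L * norm (y - z)"
    and A2_diff: "\<And>i y. i < m \<Longrightarrow> (g i has_derivative (\<lambda>h. gradg i y \<bullet> h)) (at y)"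
    and A2_lip: "\<And>i. i < m \<Longrightarrow> \<exists>L. \<forall>y z. norm (gradg i y - gradg i z) \<le> L * norm (y - z)"
    and A3_level_bounded: "\<And>\<alpha>. bounded {y. feasible g m y \<and> f y + P1 y - P2 y \<le> \<alpha>}"
    and B_cont_diff: "\<And>i. i < m \<Longrightarrow> continuous_on UNIV (gradg i)"
    and B_MFCQ: "\<And>y. feasible g m y \<Longrightarrow> \<exists>d. \<forall>i<m. g i y = 0 \<longrightarrow> gradg i y \<bullet> d < 0"
    and c_pos: "c > 0" and Llo_pos: "0 < Llo" and tau_gt: "\<tau> > 1"
    and x0_feas: "feasible g m (x 0)"
    and xi_sub: "\<And>t. xi t \<in> subdiff P2 (x t)"
    and step: "\<And>t. scp_ls_step f gradf P1 P2 g gradg m c Llo Lhi \<tau>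
                     (x t) (xi t) (Lf t) (Lg t) (x (Suc t))"
    and mult: "\<And>t. sub_multiplier gradf P1 g gradg m (x t) (xi t) (Lf t) (Lg t)
                     (x (Suc t)) (lam t)"
begin

abbreviation objective :: "'a \<Rightarrow> real" where
  "objective y \<equiv> f y + P1 y - P2 y"

lemma f_quadratic_upper_bound:
  obtains L where "\<And>y z. f z \<le> f y + gradf y \<bullet> (z - y) + L / 2 * (norm (z - y))\<^sup>2"
  using A1 lipschitz_gradient_quadratic_upper_bound[OF f_grad] by blast

lemma g_quadratic_upper_bound:
  obtains L where "\<And>i y z. i < m \<Longrightarrow>
    g i z \<le> g i y + gradg i y \<bullet> (z - y) + L / 2 * (norm (z - y))\<^sup>2"
proof -
  have "\<forall>i. \<exists>L. i < m \<longrightarrow> (\<forall>y z. norm (gradg i y - gradg i z) \<le> L * norm (y - z))"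
    using A2_lip by blast
  then obtain Li where Li: "\<And>i y z. i < m \<Longrightarrow> norm (gradg i y - gradg i z) \<le> Li i * norm (y - z)"
    by metis
  define L where "L = (\<Sum>j<m. \<bar>Li j\<bar>)"
  have "Li i \<le> L" if "i < m" for i
    using member_le_sum[of i "{..<m}" "\<lambda>j. \<bar>Li j\<bar>"] that by (simp add: L_def)
  then have "norm (gradg i y - gradg i z) \<le> L * norm (y - z)" if "i < m" for i y z
    using order_trans[OF Li[OF that] mult_right_mono[OF _ norm_ge_zero]] that by blast
  then show ?thesis
    using that lipschitz_gradient_quadratic_upper_bound[OF A2_diff] by blast
qed

lemma iterate_feasible: "feasible g m (x t)"
  using x0_feas scp_ls_step_accepted(1)[OF step] by (cases t) auto

lemma objective_sufficient_decrease:
  "objective (x (Suc t)) \<le> objective (x t) - c / 2 * (norm (x (Suc t) - x t))\<^sup>2"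
  by (rule scp_ls_step_accepted(2)[OF step])

lemma objective_le_initial: "objective (x t) \<le> objective (x 0)"
proof (induction t)
  case (Suc t)
  have "0 \<le> c / 2 * (norm (x (Suc t) - x t))\<^sup>2"
    using c_pos by simp
  then show ?case
    using Suc objective_sufficient_decrease[of t] by linarith
qed simp

lemma iterates_bounded:
  obtains R where "\<And>t. norm (x t) \<le> R"
  using A3_level_bounded[of "objective (x 0)"] iterate_feasible objective_le_initial
  by (auto simp: bounded_iff)

lemma objective_continuous: "continuous_on UNIV objective"
proof -
  have "continuous_on UNIV f"
    using has_derivative_continuous[OF f_grad] by (simp add: continuous_at_imp_continuous_on)
  then show ?thesis
    by (intro continuous_intros P1_cont P2_cont)
qed

lemma g_continuous: "i < m \<Longrightarrow> continuous_on UNIV (g i)"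
  using has_derivative_continuous[OF A2_diff] by (simp add: continuous_at_imp_continuous_on)

lemma gradf_continuous: "continuous_on UNIV gradf"
proof -
  obtain L where L: "\<And>y z. norm (gradf y - gradf z) \<le> L * norm (y - z)"
    using A1 by blast
  have "norm (gradf y - gradf z) \<le> max L 0 * norm (y - z)" for y z
    using order_trans[OF L mult_right_mono[OF _ norm_ge_zero]] by simp
  then have "(max L 0)-lipschitz_on UNIV gradf"
    by (intro lipschitz_onI) (auto simp: dist_norm)
  then show ?thesis
    by (rule lipschitz_on_continuous_on)
qed

lemma steps_tendsto_zero: "(\<lambda>t. x (Suc t) - x t) \<longlonglongrightarrow> 0"
proof -
  obtain R where R: "\<And>t. norm (x t) \<le> R"
    using iterates_bounded by blast
  obtain B where "\<And>y. norm y \<le> R \<Longrightarrow> \<bar>objective y\<bar> \<le> B"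
    using continuous_on_bounded_cball[OF objective_continuous] by blast
  then have "- B \<le> objective (x t)" for t
    using R[of t] by fastforce
  then show ?thesis
    by (rule sufficient_decrease_imp_steps_tendsto_zero[where a = "\<lambda>t. objective (x t)" and u = x,
          OF c_pos objective_sufficient_decrease])
qed

lemma subgradients_bounded:
  obtains B where "\<And>t. norm (xi t) \<le> B"
proof -
  obtain R where R: "\<And>t. norm (x t) \<le> R"
    using iterates_bounded by blast
  obtain B where "\<And>y. norm y \<le> R + 1 \<Longrightarrow> \<bar>P2 y\<bar> \<le> B"
    using continuous_on_bounded_cball[OF P2_cont] by blast
  then show ?thesis
    using that subdiff_norm_le[OF xi_sub R] by blast
qed

lemma parameters_bounded:
  obtains B where "\<And>t. \<bar>Lf t\<bar> \<le> B" and "\<And>t i. i < m \<Longrightarrow> \<bar>Lg t i\<bar> \<le> B"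
proof -
  obtain L where L: "\<And>y z. f z \<le> f y + gradf y \<bullet> (z - y) + L / 2 * (norm (z - y))\<^sup>2"
    using f_quadratic_upper_bound by blast
  obtain L' where L': "\<And>i y z. i < m \<Longrightarrow>
      g i z \<le> g i y + gradg i y \<bullet> (z - y) + L' / 2 * (norm (z - y))\<^sup>2"
    using g_quadratic_upper_bound by blast
  have Lf_bound: "Llo \<le> Lf t \<and> Lf t \<le> max Lhi (\<tau> * (L + c))" for t
    by (rule scp_ls_step_parameter_bounds(1)[OF L L' tau_gt Llo_pos iterate_feasible xi_sub step])
  have Lg_bound: "Llo \<le> Lg t i \<and> Lg t i \<le> max 1 (\<tau> * L' / Llo) * Lhi" if "i < m" for t i
    by (rule scp_ls_step_parameter_bounds(2)[OF L L' tau_gt Llo_pos iterate_feasible xi_sub step that])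
  show ?thesis
  proof (rule that[of "max (max Lhi (\<tau> * (L + c))) (max 1 (\<tau> * L' / Llo) * Lhi)"])
    show "\<bar>Lf t\<bar> \<le> max (max Lhi (\<tau> * (L + c))) (max 1 (\<tau> * L' / Llo) * Lhi)" for t
      using Lf_bound[of t] Llo_pos by auto
    show "\<bar>Lg t i\<bar> \<le> max (max Lhi (\<tau> * (L + c))) (max 1 (\<tau> * L' / Llo) * Lhi)" if "i < m" for t i
      using Lg_bound[OF that, of t] Llo_pos by auto
  qed
qed

lemma multiplier_nonneg: "i < m \<Longrightarrow> 0 \<le> lam t i"
  using mult[of t] by (simp add: sub_multiplier_def)

lemma next_iterate_minimizes_lagrangian:
  "subobj gradf P1 (x t) (xi t) (Lf t) (x (Suc t))
     \<le> subobj gradf P1 (x t) (xi t) (Lf t) z + (\<Sum>i<m. lam t i * Gbar g gradg i z (x t) (Lg t))"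
proof -
  have "(\<Sum>i<m. lam t i * Gbar g gradg i (x (Suc t)) (x t) (Lg t)) = 0"
    using mult[of t] by (auto intro!: sum.neutral simp: sub_multiplier_def)
  moreover have "subobj gradf P1 (x t) (xi t) (Lf t) (x (Suc t))
        + (\<Sum>i<m. lam t i * Gbar g gradg i (x (Suc t)) (x t) (Lg t))
      \<le> subobj gradf P1 (x t) (xi t) (Lf t) z + (\<Sum>i<m. lam t i * Gbar g gradg i z (x t) (Lg t))"
    using mult[of t] unfolding sub_multiplier_def by blast
  ultimately show ?thesis
    by simp
qed

lemma convergent_subsequence_of_iterates:
  fixes \<sigma> :: "nat \<Rightarrow> nat" and q :: "nat \<Rightarrow> nat \<Rightarrow> real"
  assumes q: "\<And>n i. i < m \<Longrightarrow> \<bar>q n i\<bar> \<le> Bq"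
  obtains r y v lf lg w where "strict_mono r"
    and "(\<lambda>k. x (\<sigma> (r k))) \<longlonglongrightarrow> y" "(\<lambda>k. xi (\<sigma> (r k))) \<longlonglongrightarrow> v" "(\<lambda>k. Lf (\<sigma> (r k))) \<longlonglongrightarrow> lf"
    and "\<And>i. i < m \<Longrightarrow> (\<lambda>k. Lg (\<sigma> (r k)) i) \<longlonglongrightarrow> lg i"
    and "\<And>i. i < m \<Longrightarrow> (\<lambda>k. q (r k) i) \<longlonglongrightarrow> w i"
proof -
  obtain R where R: "\<And>t. norm (x t) \<le> R"
    using iterates_bounded by blast
  obtain Bxi where Bxi: "\<And>t. norm (xi t) \<le> Bxi"
    using subgradients_bounded by blast
  obtain BL where BL: "\<And>t. \<bar>Lf t\<bar> \<le> BL" "\<And>t i. i < m \<Longrightarrow> \<bar>Lg t i\<bar> \<le> BL"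
    using parameters_bounded by blast
  have "range (\<lambda>n. (x (\<sigma> n), xi (\<sigma> n), Lf (\<sigma> n))) \<subseteq> cball 0 R \<times> cball 0 Bxi \<times> cball 0 BL"
    using R Bxi BL by auto
  then have "bounded (range (\<lambda>n. (x (\<sigma> n), xi (\<sigma> n), Lf (\<sigma> n))))"
    by (rule bounded_subset[OF bounded_Times[OF bounded_cball bounded_Times[OF bounded_cball bounded_cball]]])
  then obtain r1 l where r1: "strict_mono r1"
    and l: "((\<lambda>n. (x (\<sigma> n), xi (\<sigma> n), Lf (\<sigma> n))) \<circ> r1) \<longlonglongrightarrow> l"
    using bounded_imp_convergent_subsequence by blast
  have "range (\<lambda>n. (Lg (\<sigma> (r1 n)) i, q (r1 n) i)) \<subseteq> cball 0 BL \<times> cball 0 Bq" if "i < m" for i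
    using BL q that by auto
  then have "bounded (range (\<lambda>n. (Lg (\<sigma> (r1 n)) i, q (r1 n) i)))" if "i < m" for i
    by (rule bounded_subset[OF bounded_Times[OF bounded_cball bounded_cball]]) (use that in blast)
  then obtain r2 l' where r2: "strict_mono r2"
    and l': "\<And>i. i < m \<Longrightarrow> (\<lambda>k. (Lg (\<sigma> (r1 (r2 k))) i, q (r1 (r2 k)) i)) \<longlonglongrightarrow> l' i"
    using bounded_family_convergent_subsequence[of m "\<lambda>n i. (Lg (\<sigma> (r1 n)) i, q (r1 n) i)"] by blast
  have triple: "(\<lambda>k. (x (\<sigma> (r1 (r2 k))), xi (\<sigma> (r1 (r2 k))), Lf (\<sigma> (r1 (r2 k))))) \<longlonglongrightarrow> l"
    using LIMSEQ_subseq_LIMSEQ[OF l r2] by (simp add: o_def)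
  have "(\<lambda>k. x (\<sigma> (r1 (r2 k)))) \<longlonglongrightarrow> fst l"
    and "(\<lambda>k. xi (\<sigma> (r1 (r2 k)))) \<longlonglongrightarrow> fst (snd l)"
    and "(\<lambda>k. Lf (\<sigma> (r1 (r2 k)))) \<longlonglongrightarrow> snd (snd l)"
    using tendsto_fst[OF triple] tendsto_fst[OF tendsto_snd[OF triple]] tendsto_snd[OF tendsto_snd[OF triple]]
    by simp_all
  moreover have "(\<lambda>k. Lg (\<sigma> (r1 (r2 k))) i) \<longlonglongrightarrow> fst (l' i)"
    and "(\<lambda>k. q (r1 (r2 k)) i) \<longlonglongrightarrow> snd (l' i)" if "i < m" for i
    using tendsto_fst[OF l'[OF that]] tendsto_snd[OF l'[OF that]] by auto
  ultimately show ?thesis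
    using strict_mono_o[OF r1 r2]
    by (intro that[of "r1 \<circ> r2" "fst l" "fst (snd l)" "snd (snd l)" "\<lambda>i. fst (l' i)" "\<lambda>i. snd (l' i)"])
      auto
qed


end

text \<open>
  Limits of the subproblem data along indices \<sigma> tending to infinity, with the multipliers
  scaled by \<rho>: \<rho> = 1 serves the stationarity proof, \<rho> = 1 / (sum of the multipliers)
  the proof that the multipliers are bounded.
\<close>

locale scp_ls_limit = scp_ls_run +
  fixes \<sigma> :: "nat \<Rightarrow> nat" and \<rho> :: "nat \<Rightarrow> real" and \<rho>0 :: real
    and y v :: 'a and lf :: real and lg w :: "nat \<Rightarrow> real"
  assumes \<sigma>_tendsto: "filterlim \<sigma> at_top sequentially"
    and \<rho>_nonneg: "\<And>k. 0 \<le> \<rho> k" and \<rho>_tendsto: "\<rho> \<longlonglongrightarrow> \<rho>0"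
    and x_tendsto: "(\<lambda>k. x (\<sigma> k)) \<longlonglongrightarrow> y" and xi_tendsto: "(\<lambda>k. xi (\<sigma> k)) \<longlonglongrightarrow> v"
    and Lf_tendsto: "(\<lambda>k. Lf (\<sigma> k)) \<longlonglongrightarrow> lf"
    and Lg_tendsto: "\<And>i. i < m \<Longrightarrow> (\<lambda>k. Lg (\<sigma> k) i) \<longlonglongrightarrow> lg i"
    and scaled_lam_tendsto: "\<And>i. i < m \<Longrightarrow> (\<lambda>k. \<rho> k * lam (\<sigma> k) i) \<longlonglongrightarrow> w i"
begin

lemma next_iterates_tendsto: "(\<lambda>k. x (Suc (\<sigma> k))) \<longlonglongrightarrow> y"
proof -
  have "(\<lambda>k. x (\<sigma> k) + (x (Suc (\<sigma> k)) - x (\<sigma> k))) \<longlonglongrightarrow> y + 0"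
    using x_tendsto filterlim_compose[OF steps_tendsto_zero \<sigma>_tendsto] by (rule tendsto_add)
  then show ?thesis
    by simp
qed

lemma g_tendsto: "i < m \<Longrightarrow> (\<lambda>k. g i (x (\<sigma> k))) \<longlonglongrightarrow> g i y"
  using continuous_on_tendsto_compose[OF g_continuous x_tendsto] by simp

lemma gradg_tendsto: "i < m \<Longrightarrow> (\<lambda>k. gradg i (x (\<sigma> k))) \<longlonglongrightarrow> gradg i y"
  using continuous_on_tendsto_compose[OF B_cont_diff x_tendsto] by simp

lemma gradf_tendsto: "(\<lambda>k. gradf (x (\<sigma> k))) \<longlonglongrightarrow> gradf y"
  using continuous_on_tendsto_compose[OF gradf_continuous x_tendsto] by simp

lemma limit_feasible: "feasible g m y"
  unfolding feasible_def
proof safe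
  fix i
  assume "i < m"
  then have "g i (x (\<sigma> k)) \<le> 0" for k
    using iterate_feasible by (simp add: feasible_def)
  then show "g i y \<le> 0"
    by (intro LIMSEQ_le_const2[OF g_tendsto[OF \<open>i < m\<close>]]) auto
qed

lemma limit_weights_nonneg: "i < m \<Longrightarrow> 0 \<le> w i"
  using \<rho>_nonneg multiplier_nonneg by (intro LIMSEQ_le_const[OF scaled_lam_tendsto]) auto

lemma limit_complementary: "i < m \<Longrightarrow> w i * g i y = 0"
proof -
  assume i: "i < m"
  have "(\<lambda>k. Gbar g gradg i (x (Suc (\<sigma> k))) (x (\<sigma> k)) (Lg (\<sigma> k)))
      \<longlonglongrightarrow> g i y + gradg i y \<bullet> (y - y) + lg i / 2 * (norm (y - y))\<^sup>2"
    unfolding Gbar_def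
    by (intro tendsto_intros g_tendsto gradg_tendsto next_iterates_tendsto x_tendsto Lg_tendsto i) simp
  then have "(\<lambda>k. \<rho> k * lam (\<sigma> k) i * Gbar g gradg i (x (Suc (\<sigma> k))) (x (\<sigma> k)) (Lg (\<sigma> k)))
      \<longlonglongrightarrow> w i * g i y"
    using tendsto_mult[OF scaled_lam_tendsto[OF i]] by simp
  moreover have "\<rho> k * lam (\<sigma> k) i * Gbar g gradg i (x (Suc (\<sigma> k))) (x (\<sigma> k)) (Lg (\<sigma> k)) = 0" for k
    using mult[of "\<sigma> k"] i by (simp add: sub_multiplier_def)
  ultimately show ?thesis
    using LIMSEQ_unique by fastforce
qed

lemma limit_subgradient: "v \<in> subdiff P2 y"
  using xi_sub by (rule subdiff_limit[OF P2_cont _ x_tendsto xi_tendsto])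

lemma limit_model_inequality:
  "\<rho>0 * P1 y \<le> \<rho>0 * ((gradf y - v) \<bullet> (z - y) + lf / 2 * (norm (z - y))\<^sup>2 + P1 z)
     + (\<Sum>i<m. w i * (gradg i y \<bullet> (z - y) + lg i / 2 * (norm (z - y))\<^sup>2))"
proof -
  let ?S = "\<lambda>k. subobj gradf P1 (x (\<sigma> k)) (xi (\<sigma> k)) (Lf (\<sigma> k))"
  let ?G = "\<lambda>k i. Gbar g gradg i z (x (\<sigma> k)) (Lg (\<sigma> k))"
  have "(\<lambda>k. \<rho> k * ?S k (x (Suc (\<sigma> k))))
      \<longlonglongrightarrow> \<rho>0 * ((gradf y - v) \<bullet> (y - y) + lf / 2 * (norm (y - y))\<^sup>2 + P1 y)"
    unfolding subobj_def
    by (intro tendsto_intros \<rho>_tendsto gradf_tendsto xi_tendsto next_iterates_tendsto x_tendsto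
        Lf_tendsto continuous_on_tendsto_compose[OF P1_cont next_iterates_tendsto]) auto
  moreover have "(\<lambda>k. \<rho> k * ?S k z + (\<Sum>i<m. (\<rho> k * lam (\<sigma> k) i) * ?G k i))
      \<longlonglongrightarrow> \<rho>0 * ((gradf y - v) \<bullet> (z - y) + lf / 2 * (norm (z - y))\<^sup>2 + P1 z)
        + (\<Sum>i<m. w i * (g i y + gradg i y \<bullet> (z - y) + lg i / 2 * (norm (z - y))\<^sup>2))"
    unfolding subobj_def Gbar_def
    by (intro tendsto_intros \<rho>_tendsto gradf_tendsto xi_tendsto x_tendsto Lf_tendsto
        scaled_lam_tendsto g_tendsto gradg_tendsto Lg_tendsto; simp)
  moreover have "\<rho> k * ?S k (x (Suc (\<sigma> k))) \<le> \<rho> k * ?S k z + (\<Sum>i<m. (\<rho> k * lam (\<sigma> k) i) * ?G k i)"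
    for k
    using mult_left_mono[OF next_iterate_minimizes_lagrangian \<rho>_nonneg]
    by (simp add: distrib_left sum_distrib_left mult.assoc)
  moreover have "(\<Sum>i<m. w i * (g i y + gradg i y \<bullet> (z - y) + lg i / 2 * (norm (z - y))\<^sup>2))
      = (\<Sum>i<m. w i * (gradg i y \<bullet> (z - y) + lg i / 2 * (norm (z - y))\<^sup>2))"
    using limit_complementary by (intro sum.cong) (auto simp: distrib_left)
  ultimately show ?thesis
    using LIMSEQ_le by fastforce
qed

end

context scp_ls_run
begin

theorem multipliers_bounded: "\<exists>B. \<forall>t. \<forall>i<m. \<bar>lam t i\<bar> \<le> B"
proof -
  define S where "S t = (\<Sum>i<m. lam t i)" for t
  have lam_le_S: "\<bar>lam t i\<bar> \<le> S t" if "i < m" for t i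
    using member_le_sum[of i "{..<m}" "lam t"] multiplier_nonneg that by (simp add: S_def)
  have "\<exists>B. \<forall>t. S t \<le> B"
  proof (rule ccontr)
    assume "\<not> (\<exists>B. \<forall>t. S t \<le> B)"
    then obtain \<sigma> where \<sigma>: "filterlim \<sigma> at_top sequentially" and S_large: "\<And>n. real n < S (\<sigma> n)"
      by (metis unbounded_above_seqE)
    have S_pos: "0 < S (\<sigma> n)" for n
      using S_large[of n] of_nat_0_le_iff[of n] by linarith
    define q where "q n i = lam (\<sigma> n) i / S (\<sigma> n)" for n i
    have "\<bar>q n i\<bar> \<le> 1" if "i < m" for n i
      using lam_le_S[OF that, of "\<sigma> n"] S_pos[of n] by (simp add: q_def)
    then obtain r y v lf lg w where r: "strict_mono r"
      and lims: "(\<lambda>k. x (\<sigma> (r k))) \<longlonglongrightarrow> y" "(\<lambda>k. xi (\<sigma> (r k))) \<longlonglongrightarrow> v"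
        "(\<lambda>k. Lf (\<sigma> (r k))) \<longlonglongrightarrow> lf" "\<And>i. i < m \<Longrightarrow> (\<lambda>k. Lg (\<sigma> (r k)) i) \<longlonglongrightarrow> lg i"
        "\<And>i. i < m \<Longrightarrow> (\<lambda>k. q (r k) i) \<longlonglongrightarrow> w i"
      using convergent_subsequence_of_iterates[where \<sigma> = \<sigma> and q = q] by blast
    have "filterlim (\<lambda>n. S (\<sigma> n)) at_top sequentially"
      by (rule filterlim_at_top_mono[OF filterlim_real_sequentially always_eventually])
        (use S_large in \<open>auto intro: less_imp_le\<close>)
    then have "(\<lambda>k. inverse (S (\<sigma> (r k)))) \<longlonglongrightarrow> 0"
      by (intro tendsto_inverse_0_at_top filterlim_compose[OF _ filterlim_subseq[OF r]])
    then interpret lim: scp_ls_limit f P1 P2 gradf g gradg m c Llo Lhi \<tau> x xi Lf Lg lam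
      "\<lambda>k. \<sigma> (r k)" "\<lambda>k. inverse (S (\<sigma> (r k)))" 0 y v lf lg w
      using S_pos lims filterlim_compose[OF \<sigma> filterlim_subseq[OF r]]
      by unfold_locales (auto simp: q_def divide_inverse mult.commute less_imp_le)
    obtain d where "\<forall>i<m. g i y = 0 \<longrightarrow> gradg i y \<bullet> d < 0"
      using B_MFCQ[OF lim.limit_feasible] by blast
    then have "\<forall>i<m. w i = 0"
      using lim.limit_weights_nonneg lim.limit_complementary lim.limit_model_inequality
      by (intro mfcq_multipliers_vanish[where g = g and gradg = gradg and y = y and d = d and lg = lg])
        auto
    moreover have "(\<Sum>i<m. w i) = 1"
    proof (rule LIMSEQ_unique)
      show "(\<lambda>k. \<Sum>i<m. q (r k) i) \<longlonglongrightarrow> (\<Sum>i<m. w i)"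
        using lims(5) by (intro tendsto_sum) auto
      have "(\<Sum>i<m. q n i) = 1" for n
        using S_pos[of n] by (simp add: q_def S_def flip: sum_divide_distrib)
      then show "(\<lambda>k. \<Sum>i<m. q (r k) i) \<longlonglongrightarrow> 1"
        by simp
    qed
    ultimately show False
      by simp
  qed
  then show ?thesis
    using lam_le_S by (meson order_trans)
qed

theorem accumulation_point_stationary:
  assumes r0: "strict_mono r0" and x_r0: "(x \<circ> r0) \<longlonglongrightarrow> xbar"
  shows "stationary gradf P1 P2 g gradg m xbar"
proof -
  obtain B where B: "\<And>n i. i < m \<Longrightarrow> \<bar>lam (r0 n) i\<bar> \<le> B"
    using multipliers_bounded by blast
  obtain r y v lf lg w where r: "strict_mono r"
    and lims: "(\<lambda>k. x (r0 (r k))) \<longlonglongrightarrow> y" "(\<lambda>k. xi (r0 (r k))) \<longlonglongrightarrow> v"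
      "(\<lambda>k. Lf (r0 (r k))) \<longlonglongrightarrow> lf" "\<And>i. i < m \<Longrightarrow> (\<lambda>k. Lg (r0 (r k)) i) \<longlonglongrightarrow> lg i"
      "\<And>i. i < m \<Longrightarrow> (\<lambda>k. lam (r0 (r k)) i) \<longlonglongrightarrow> w i"
    using convergent_subsequence_of_iterates[where \<sigma> = r0 and q = "\<lambda>n i. lam (r0 n) i", OF B] by blast
  have "(\<lambda>k. x (r0 (r k))) \<longlonglongrightarrow> xbar"
    using LIMSEQ_subseq_LIMSEQ[OF x_r0 r] by (simp add: o_def)
  then have "y = xbar"
    using lims(1) LIMSEQ_unique by blast
  interpret lim: scp_ls_limit f P1 P2 gradf g gradg m c Llo Lhi \<tau> x xi Lf Lg lam
    "\<lambda>k. r0 (r k)" "\<lambda>k. 1" 1 xbar v lf lg w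
    using lims \<open>y = xbar\<close> filterlim_compose[OF filterlim_subseq[OF r0] filterlim_subseq[OF r]]
    by unfold_locales auto
  define a where "a = gradf xbar - v + (\<Sum>i<m. w i *\<^sub>R gradg i xbar)"
  define C where "C = lf / 2 + (\<Sum>i<m. w i * (lg i / 2))"
  have "P1 xbar \<le> a \<bullet> (z - xbar) + C * (norm (z - xbar))\<^sup>2 + P1 z" for z
  proof -
    define u where "u = z - xbar"
    define N where "N = (norm u)\<^sup>2"
    have "a \<bullet> u + C * N = (gradf xbar - v) \<bullet> u + lf / 2 * N
        + (\<Sum>i<m. w i * (gradg i xbar \<bullet> u + lg i / 2 * N))"
      by (simp add: a_def C_def inner_sum_left sum_distrib_left sum_distrib_right sum.distrib algebra_simps)
    then show ?thesis
      using lim.limit_model_inequality[of z] by (simp add: u_def N_def)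
  qed
  then have "- a \<in> subdiff P1 xbar"
    by (rule subdiff_of_quadratic_minorant[OF P1_convex])
  then show ?thesis
    unfolding stationary_def
    using lim.limit_feasible lim.limit_weights_nonneg lim.limit_complementary lim.limit_subgradient
    by (intro conjI exI[of _ w] bexI[of _ "- a"] bexI[of _ v]) (auto simp: a_def)
qed

end

theorem mainTheorem3:
  fixes f P1 P2 :: "'a::euclidean_space \<Rightarrow> real"
    and gradf :: "'a \<Rightarrow> 'a"
    and g :: "nat \<Rightarrow> 'a \<Rightarrow> real" and gradg :: "nat \<Rightarrow> 'a \<Rightarrow> 'a" and m :: nat
    and c Llo Lhi \<tau> :: real
    and x xi :: "nat \<Rightarrow> 'a" and Lf :: "nat \<Rightarrow> real" and Lg lam :: "nat \<Rightarrow> nat \<Rightarrow> real"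
  assumes f_grad: "\<And>y. (f has_derivative (\<lambda>h. gradf y \<bullet> h)) (at y)"
    and P1_convex: "convex_on UNIV P1" and P1_cont: "continuous_on UNIV P1"
    and P2_convex: "convex_on UNIV P2" and P2_cont: "continuous_on UNIV P2"
    and feasible_nonempty: "\<exists>y. feasible g m y"
    and A1: "\<exists>L. \<forall>y z. norm (gradf y - gradf z) \<le> L * norm (y - z)"
    and A2_diff: "\<And>i y. i < m \<Longrightarrow> (g i has_derivative (\<lambda>h. gradg i y \<bullet> h)) (at y)"
    and A2_lip: "\<And>i. i < m \<Longrightarrow> \<exists>L. \<forall>y z. norm (gradg i y - gradg i z) \<le> L * norm (y - z)"
    and A3_level_bounded:
      "\<And>\<alpha>. bounded {y. feasible g m y \<and> f y + P1 y - P2 y \<le> \<alpha>}"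
    and B_cont_diff: "\<And>i. i < m \<Longrightarrow> continuous_on UNIV (gradg i)"
    and B_MFCQ: "\<And>y. feasible g m y \<Longrightarrow>
                   \<exists>d. \<forall>i<m. g i y = 0 \<longrightarrow> gradg i y \<bullet> d < 0"
    and c_pos: "c > 0" and Llo_pos: "0 < Llo" and Llo_Lhi: "Llo < Lhi" and tau_gt: "\<tau> > 1"
    and x0_feas: "feasible g m (x 0)"
    and xi_sub: "\<And>t. xi t \<in> subdiff P2 (x t)"
    and step: "\<And>t. scp_ls_step f gradf P1 P2 g gradg m c Llo Lhi \<tau>
                     (x t) (xi t) (Lf t) (Lg t) (x (Suc t))"
    and mult: "\<And>t. sub_multiplier gradf P1 g gradg m (x t) (xi t) (Lf t) (Lg t)
                     (x (Suc t)) (lam t)"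
  shows "(\<exists>B. \<forall>t. \<forall>i<m. \<bar>lam t i\<bar> \<le> B) \<and>
         (\<forall>xbar. (\<exists>r. strict_mono r \<and> (x \<circ> r) \<longlonglongrightarrow> xbar) \<longrightarrow>
                  stationary gradf P1 P2 g gradg m xbar)"
proof -
  interpret scp_ls_run f P1 P2 gradf g gradg m c Llo Lhi \<tau> x xi Lf Lg lam
    by (rule scp_ls_run.intro; fact assms)
  show ?thesis
    using multipliers_bounded accumulation_point_stationary by blast
qed

end
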